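(* Let $k\ge2$ and let $G=(\{a,b\},\varphi,a)$ be a circular D0L-system with $\varphi$ $k$-uniform, and suppose the graph of overhangs $GO_G$ contains two distinct vertices $s_1,s_2$ with an edge from $s_1$ to $s_2$ labelled $(\varphi(a),\varphi(a),\ell)$ and an edge from $s_2$ to $s_1$ labelled $(\varphi(b),\varphi(b),\ell)$. Let $R_{ab}=\max\{m: (ab)^m\in S(L(G))\}$, $R_{ba}=\max\{m:(ba)^m\in S(L(G))\}$ and $R_2=\min\{R_{ab},R_{ba}\}$. Then $R_2\le \frac{k-2}{2}$.
   Context: A D0L-system $G=(\mathcal{A},\varphi,w)$ has $L(G)=\{\varphi^n(w)\}$ and $S(L(G))$ the set of factors of its words. An interpretation of $u\in S(L(G))$ is $(p,v,s)$ with $v\in S(L(G))$, $\varphi(v)=pus$. With $v=v_1\cdots v_n$, $v'=v'_1\cdots v'_m$, $u=u_1\cdots u_\ell$, interpretations $(p,v,s),(p',v',s')$ are synchronized at position $j$ if $\varphi(v_1\cdots v_i)=pu_1\cdots u_j$ and $\varphi(v'_1\cdots v'_{i'})=p'u_1\cdots u_j$ for some $i,i'$; $u$ has a synchronizing point at $j$ if all its interpretations are pairwise synchronized at $j$. A PD0L-system injective on $S(L(G))$ is circular if there is $Z$ such that every $u\in S(L(G))$ with $|u|>Z$ has a synchronizing point. $\varphi$ is $k$-uniform if $|\varphi(a)|=|\varphi(b)|=k$. Let $X=\{\varphi(a),\varphi(b)\}$. An overhang is a triple $(u_1\cdots u_m,v_1\cdots v_n,|x|)$ with $u_i,v_j\in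 X$, $x$ nonempty, such that: (i) $x$ is a suffix of $u_1\cdots u_m$ but not of $u_2\cdots u_m$; (ii) $x$ is a prefix of $v_1\cdots v_n$ but not of $v_1\cdots v_{n-1}$; (iii) $x\ne u_1\cdots u_m$ or $x\ne v_1\cdots v_n$; (iv) $|v_1\cdots v_{n-1}|<|x(u_2\cdots u_m)^{-1}|$. Its left overhang is $u_1\cdots u_mx^{-1}$, right overhang $x^{-1}v_1\cdots v_n$. $GO_G$ has an edge from $s_1$ to $s_2$ labelled by each overhang with left overhang $s_1$ and right overhang $s_2$. *)

theory Defs
  imports Complex_Main "HOL-Library.Sublist"
begin

datatype letter = La | Lb

type_synonym morph = "letter \<Rightarrow> letter list"

definition morph_ext :: "morph \<Rightarrow> letter list \<Rightarrow> letter list" where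
  "morph_ext \<phi> w = concat (map \<phi> w)"

definition lang :: "morph \<Rightarrow> letter list \<Rightarrow> letter list set" where
  "lang \<phi> w = {(morph_ext \<phi> ^^ n) w | n. True}"

definition factors :: "morph \<Rightarrow> letter list \<Rightarrow> letter list set" where
  "factors \<phi> w = {u. \<exists>z\<in>lang \<phi> w. \<exists>p s. z = p @ u @ s}"

definition interp :: "morph \<Rightarrow> letter list \<Rightarrow> letter list \<Rightarrow>
    letter list \<times> letter list \<times> letter list \<Rightarrow> bool" where
  "interp \<phi> w u I = (case I of (p, v, s) \<Rightarrow>
      v \<in> factors \<phi> w \<and> morph_ext \<phi> v = p @ u @ s)"

definition synchronized_at :: "morph \<Rightarrow> letter list \<Rightarrow>
    letter list \<times> letter list \<times> letter list \<Rightarrow>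
    letter list \<times> letter list \<times> letter list \<Rightarrow> nat \<Rightarrow> bool" where
  "synchronized_at \<phi> u I I' j = (case I of (p, v, s) \<Rightarrow> case I' of (p', v', s') \<Rightarrow>
      (\<exists>i\<le>length v. morph_ext \<phi> (take i v) = p @ take j u) \<and>
      (\<exists>i'\<le>length v'. morph_ext \<phi> (take i' v') = p' @ take j u))"

definition sync_point :: "morph \<Rightarrow> letter list \<Rightarrow> letter list \<Rightarrow> nat \<Rightarrow> bool" where
  "sync_point \<phi> w u j = (j \<le> length u \<and>
      (\<forall>I I'. interp \<phi> w u I \<longrightarrow> interp \<phi> w u I' \<longrightarrow>
          synchronized_at \<phi> u I I' j))"

definition propagating :: "morph \<Rightarrow> bool" where
  "propagating \<phi> = (\<forall>c. \<phi> c \<noteq> [])"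

definition circular :: "morph \<Rightarrow> letter list \<Rightarrow> bool" where
  "circular \<phi> w = (propagating \<phi> \<and> inj_on (morph_ext \<phi>) (factors \<phi> w) \<and>
      (\<exists>Z::nat. \<forall>u\<in>factors \<phi> w. length u > Z \<longrightarrow> (\<exists>j. sync_point \<phi> w u j)))"

definition uniform :: "morph \<Rightarrow> nat \<Rightarrow> bool" where
  "uniform \<phi> k = (length (\<phi> La) = k \<and> length (\<phi> Lb) = k)"

definition overhang_wit :: "morph \<Rightarrow> letter list list \<Rightarrow> letter list list \<Rightarrow> letter list \<Rightarrow> bool" where
  "overhang_wit \<phi> us vs x = (
      us \<noteq> [] \<and> vs \<noteq> [] \<and>
      set us \<subseteq> {\<phi> La, \<phi> Lb} \<and> set vs \<subseteq> {\<phi> La, \<phi> Lb} \<and> x \<noteq> [] \<and>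
      suffix x (concat us) \<and> \<not> suffix x (concat (tl us)) \<and>
      prefix x (concat vs) \<and> \<not> prefix x (concat (butlast vs)) \<and>
      (x \<noteq> concat us \<or> x \<noteq> concat vs) \<and>
      length (concat (butlast vs)) < length x - length (concat (tl us)))"

definition overhang :: "morph \<Rightarrow> letter list list \<Rightarrow> letter list list \<Rightarrow> nat \<Rightarrow> bool" where
  "overhang \<phi> us vs l = (\<exists>x. length x = l \<and> overhang_wit \<phi> us vs x)"

definition left_overhang :: "letter list list \<Rightarrow> nat \<Rightarrow> letter list" where
  "left_overhang us l = take (length (concat us) - l) (concat us)"

definition right_overhang :: "letter list list \<Rightarrow> nat \<Rightarrow> letter list" where
  "right_overhang vs l = drop l (concat vs)"

definition GO_edge :: "morph \<Rightarrow> letter list \<Rightarrow> letter list list \<times> letter list list \<times> nat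
    \<Rightarrow> letter list \<Rightarrow> bool" where
  "GO_edge \<phi> s1 lab s2 = (case lab of (us, vs, l) \<Rightarrow>
      overhang \<phi> us vs l \<and> left_overhang us l = s1 \<and> right_overhang vs l = s2)"

definition R_ab :: "morph \<Rightarrow> letter list \<Rightarrow> nat" where
  "R_ab \<phi> w = Max {m. concat (replicate m [La, Lb]) \<in> factors \<phi> w}"

definition R_ba :: "morph \<Rightarrow> letter list \<Rightarrow> nat" where
  "R_ba \<phi> w = Max {m. concat (replicate m [Lb, La]) \<in> factors \<phi> w}"

end

theory Submission
  imports Defs
begin

text \<open>The two loops of \<open>GO\<^sub>G\<close> say that \<open>\<phi>(a) = s\<^sub>1x = xs\<^sub>2\<close> and \<open>\<phi>(b) = s\<^sub>2y = ys\<^sub>1\<close> with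
  \<open>|x| = |y| = l\<close>. Hence \<open>x \<phi>((ba)\<^sup>m) = \<phi>((ab)\<^sup>m) x\<close>, so the infinite word \<open>P = \<phi>(abab\<dots>)\<close> satisfies
  \<open>P(n + l) = P(n + k)\<close>. Together with the period \<open>2k\<close> and \<open>s\<^sub>1 \<noteq> s\<^sub>2\<close> this gives \<open>P\<close> a period \<open>2h\<close>
  with \<open>k \<equiv> h (mod 2h)\<close>.

  If \<open>P\<close> alternates, then \<open>\<phi>\<close> preserves alternating words, every \<open>(ab)\<^sup>m\<close> is a factor, and
  \<open>\<phi>((ba)\<^sup>m)\<close> has an interpretation shifted by \<open>l\<close> that is never synchronized with the trivial one,
  contradicting circularity. Otherwise \<open>h \<ge> 2\<close>, and a factor \<open>(ab)\<^sup>m\<close> with \<open>2m \<ge> k - 1\<close> would be read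
  off \<open>P\<close> in at most two windows; this forces the \<open>2h\<close>-periodic indicator of "\<open>P\<close> agrees with \<open>abab\<dots>\<close>"
  to be constant, i.e. \<open>P\<close> to alternate after all.\<close>

definition periodic :: "(nat \<Rightarrow> 'a) \<Rightarrow> nat \<Rightarrow> bool" where
  "periodic f p \<longleftrightarrow> (\<forall>n. f (n + p) = f n)"

lemma periodic_add_mult: "periodic f p \<Longrightarrow> f (n + p * q) = f n"
proof (induction q)
  case (Suc q)
  then have "f (n + p * q + p) = f (n + p * q)" unfolding periodic_def by blast
  then show ?case using Suc by (simp add: ac_simps)
qed simp

lemma periodic_mod: "periodic f p \<Longrightarrow> f n = f (n mod p)"
  using periodic_add_mult[of f p "n mod p" "n div p"] by simp

lemma periodic_dvd: "periodic f p \<Longrightarrow> p dvd q \<Longrightarrow> periodic f q"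
  by (auto simp: periodic_def dvd_def periodic_add_mult)

lemma periodic_gcd:
  assumes "periodic f p" "periodic f q" "p \<noteq> 0"
  shows "periodic f (gcd p q)"
  unfolding periodic_def
proof
  fix n
  obtain a b where ab: "p * a = q * b + gcd p q" using bezout_nat[OF assms(3)] by blast
  have "f (n + gcd p q) = f (n + gcd p q + q * b)" using periodic_add_mult[OF assms(2)] by simp
  also have "\<dots> = f (n + p * a)" using ab by (simp add: ac_simps)
  also have "\<dots> = f n" using periodic_add_mult[OF assms(1)] by simp
  finally show "f (n + gcd p q) = f n" .
qed

lemma periodic_2_constant:
  assumes "periodic f 2" "f n = f (Suc n)"
  shows "f j = f 0"
proof -
  have "f 0 = f 1"
    using assms periodic_mod[OF assms(1), of n] periodic_mod[OF assms(1), of "Suc n"]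
    by (cases "even n") (auto simp: mod2_eq_if)
  then show ?thesis using periodic_mod[OF assms(1), of j] by (auto simp: mod2_eq_if)
qed

lemma periodic_constant_on_period:
  assumes "periodic f p" "0 < p" "\<forall>i<p. f (a + i) = c"
  shows "f n = c"
proof -
  define q where "q = (n + p * a - a) div p"
  define i where "i = (n + p * a - a) mod p"
  have "a \<le> n + p * a" using assms(2) by (simp add: trans_le_add2)
  then have "n + p * a = a + i + p * q" unfolding q_def i_def by simp
  then have "f n = f (a + i)"
    using periodic_add_mult[OF assms(1), of n a] periodic_add_mult[OF assms(1), of "a + i" q] by simp
  moreover have "i < p" unfolding i_def using assms(2) by simp
  ultimately show ?thesis using assms(3) by simp
qed

lemma inj_on_mod_window: "N \<le> p \<Longrightarrow> inj_on (\<lambda>n::nat. n mod p) {a..<a + N}"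
proof (rule inj_onI)
  have same: "m = n" if mn: "m \<le> n" "a \<le> m" "n < a + N" "N \<le> p" "m mod p = n mod p" for m n
  proof -
    obtain s where "n = m + p * s" using mod_eq_nat2E[OF mn(5) mn(1)] by blast
    then show ?thesis using mn by (cases s) auto
  qed
  fix m n assume "N \<le> p" "m \<in> {a..<a + N}" "n \<in> {a..<a + N}" "m mod p = n mod p"
  then show "m = n" using same[of m n] same[of n m] by (cases "m \<le> n") auto
qed

text \<open>The two windows occupy disjoint sets of residues modulo \<open>p\<close>.\<close>
lemma periodic_opposite_windows_le:
  assumes "periodic f p" "0 < p" "N1 \<le> p" "N2 \<le> p"
    and "\<forall>i<N1. f (a + i) = c" "\<forall>i<N2. f (b + i) \<noteq> c"
  shows "N1 + N2 \<le> p"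
proof -
  let ?res = "\<lambda>n. n mod p"
  have disjoint: "?res ` {a..<a + N1} \<inter> ?res ` {b..<b + N2} = {}"
  proof (rule ccontr)
    assume "?res ` {a..<a + N1} \<inter> ?res ` {b..<b + N2} \<noteq> {}"
    then obtain m n where m: "a \<le> m" "m - a < N1" and n: "b \<le> n" "n - b < N2"
      and res: "m mod p = n mod p" by fastforce
    have "f m = c" using m assms(5)[rule_format, of "m - a"] by simp
    moreover have "f n \<noteq> c" using n assms(6)[rule_format, of "n - b"] by simp
    ultimately show False using res periodic_mod[OF assms(1)] by metis
  qed
  have "N1 + N2 = card (?res ` {a..<a + N1}) + card (?res ` {b..<b + N2})"
    using card_image[OF inj_on_mod_window[OF assms(3)]] card_image[OF inj_on_mod_window[OF assms(4)]] by simp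
  also have "\<dots> = card (?res ` {a..<a + N1} \<union> ?res ` {b..<b + N2})"
    using disjoint by (simp add: card_Un_disjoint)
  also have "\<dots> \<le> card {..<p}" using assms(2) by (intro card_mono) auto
  finally show ?thesis by simp
qed

text \<open>Shifted back by one period, the second window closes the gap after the first.\<close>
lemma periodic_constant_on_windows_half_apart:
  assumes "periodic f (2 * h)" "0 < h" "3 * h \<le> N1 + N2"
    and "\<forall>i<N1. f (a + i) = c" "\<forall>j<N2. f (a + N1 + h + j) = c"
  shows "f n = c"
proof (rule periodic_constant_on_period[OF assms(1)])
  show "\<forall>i<2 * h. f (a + i) = c"
  proof (intro allI impI)
    fix i assume i: "i < 2 * h"
    show "f (a + i) = c"
    proof (cases "i < N1")
      case False
      then have "a + i + 2 * h = a + N1 + h + (i + h - N1)" by simp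
      moreover have "i + h - N1 < N2" using False i assms(3) by linarith
      ultimately show ?thesis using assms(1,5) unfolding periodic_def by metis
    qed (use assms(4) in simp)
  qed
qed (use assms(2) in simp)

definition ab_power :: "nat \<Rightarrow> letter list" where
  "ab_power m = concat (replicate m [La, Lb])"

definition ba_power :: "nat \<Rightarrow> letter list" where
  "ba_power m = concat (replicate m [Lb, La])"

lemma length_ab_power [simp]: "length (ab_power m) = 2 * m"
  by (induction m) (auto simp: ab_power_def)

lemma length_ba_power [simp]: "length (ba_power m) = 2 * m"
  by (induction m) (auto simp: ba_power_def)

lemma ab_power_add: "ab_power (m + n) = ab_power m @ ab_power n"
  by (simp add: ab_power_def replicate_add)

lemma ab_power_Suc: "ab_power (Suc m) = ab_power m @ [La, Lb]"
  using ab_power_add[of m 1] by (simp add: ab_power_def)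

lemma ab_power_Suc_ba_power: "ab_power (Suc m) = La # ba_power m @ [Lb]"
  by (induction m) (simp_all add: ab_power_def ba_power_def)

lemma nth_ab_power: "i < 2 * m \<Longrightarrow> ab_power m ! i = (if even i then La else Lb)"
proof (induction m)
  case (Suc m)
  then have "i < 2 * m + 2" by simp
  then consider "i < 2 * m" | "i = 2 * m" | "i = Suc (2 * m)" by linarith
  then show ?case using Suc.IH by cases (simp_all add: ab_power_Suc nth_append)
qed simp

definition alternating :: "letter list \<Rightarrow> bool" where
  "alternating w \<longleftrightarrow> (\<forall>i. Suc i < length w \<longrightarrow> w ! i \<noteq> w ! Suc i)"

lemma alternating_nth: "alternating w \<Longrightarrow> i < length w \<Longrightarrow> w ! i = w ! 0 \<longleftrightarrow> even i"
proof (induction i)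
  case (Suc i)
  then have "w ! i \<noteq> w ! Suc i" unfolding alternating_def by simp
  with Suc show ?case by (cases "w ! i"; cases "w ! Suc i"; cases "w ! 0") auto
qed simp

lemma alternating_ab_power: "alternating (ab_power m)"
  unfolding alternating_def by (simp add: nth_ab_power)

lemma alternating_take_drop: "alternating w \<Longrightarrow> alternating (take n (drop j w))"
  unfolding alternating_def by (auto simp: less_diff_conv add.commute)

lemma alternating_eq_ab_power:
  assumes "alternating w" "length w = 2 * m" "w ! 0 = La"
  shows "w = ab_power m"
proof (rule nth_equalityI)
  fix i assume "i < length w"
  then show "w ! i = ab_power m ! i"
    using alternating_nth[OF assms(1), of i] assms(2,3) nth_ab_power[of i m] by (cases "w ! i") auto
qed (use assms(2) in simp)

lemma sublist_ab_power_alternating: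
  assumes "alternating w" "2 * m + 1 < length w"
  shows "sublist (ab_power m) w"
proof (cases "m = 0")
  case False
  obtain j where j: "j \<le> 1" "w ! j = La"
  proof (cases "w ! 0")
    case Lb
    then have "w ! 1 = La" using alternating_nth[OF assms(1), of 1] assms(2) by (cases "w ! 1") auto
    then show ?thesis using that[of 1] by simp
  qed (use that[of 0] in simp)
  have "take (2 * m) (drop j w) = ab_power m"
    using j assms False by (intro alternating_eq_ab_power alternating_take_drop) auto
  then show ?thesis by (metis sublist_drop sublist_order.order_trans sublist_take)
qed (simp add: ab_power_def)

lemma morph_ext_Nil [simp]: "morph_ext \<phi> [] = []"
  and morph_ext_Cons [simp]: "morph_ext \<phi> (c # w) = \<phi> c @ morph_ext \<phi> w"
  and morph_ext_append [simp]: "morph_ext \<phi> (u @ v) = morph_ext \<phi> u @ morph_ext \<phi> v"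
  by (simp_all add: morph_ext_def)

lemma uniform_length: "uniform \<phi> k \<Longrightarrow> length (\<phi> c) = k"
  by (cases c) (simp_all add: uniform_def)

lemma length_morph_ext: "uniform \<phi> k \<Longrightarrow> length (morph_ext \<phi> z) = k * length z"
  by (induction z) (simp_all add: uniform_length)

lemma length_morph_ext_iterate: "uniform \<phi> k \<Longrightarrow> length ((morph_ext \<phi> ^^ n) [c]) = k ^ n"
  by (induction n) (simp_all add: length_morph_ext)

lemma nth_morph_ext:
  assumes "uniform \<phi> k" "p < k * length z"
  shows "morph_ext \<phi> z ! p = \<phi> (z ! (p div k)) ! (p mod k)"
  using assms(2)
proof (induction z arbitrary: p)
  case (Cons c z)
  have len: "length (\<phi> c) = k" using uniform_length[OF assms(1)] .
  show ?case
  proof (cases "p < k")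
    case False
    moreover have "0 < k" using Cons.prems by (cases k) auto
    ultimately have "p div k = Suc ((p - k) div k)" "p mod k = (p - k) mod k"
      by (simp_all add: le_div_geq le_mod_geq)
    moreover have "morph_ext \<phi> (c # z) ! p = morph_ext \<phi> z ! (p - k)"
      using False len by (simp add: nth_append)
    ultimately show ?thesis using Cons False by simp
  qed (simp add: len nth_append)
qed simp

lemma mem_factors_iff: "u \<in> factors \<phi> w \<longleftrightarrow> (\<exists>z\<in>lang \<phi> w. sublist u z)"
  by (auto simp: factors_def sublist_def)

lemma factors_sublist: "u \<in> factors \<phi> w \<Longrightarrow> sublist v u \<Longrightarrow> v \<in> factors \<phi> w"
  by (meson mem_factors_iff sublist_order.order_trans)

lemma iterate_in_factors: "(morph_ext \<phi> ^^ n) w \<in> factors \<phi> w"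
  unfolding mem_factors_iff lang_def by blast

lemma Nil_in_factors: "[] \<in> factors \<phi> w"
  using factors_sublist[OF iterate_in_factors[where n = 0]] by simp

lemma morph_ext_in_factors: "v \<in> factors \<phi> w \<Longrightarrow> morph_ext \<phi> v \<in> factors \<phi> w"
proof -
  assume "v \<in> factors \<phi> w"
  then obtain n p s where "(morph_ext \<phi> ^^ n) w = p @ v @ s"
    unfolding factors_def lang_def by blast
  then have "(morph_ext \<phi> ^^ Suc n) w = morph_ext \<phi> p @ morph_ext \<phi> v @ morph_ext \<phi> s" by simp
  then show ?thesis using factors_sublist[OF iterate_in_factors] by (metis sublist_appendI)
qed

lemma factor_sublist_image:
  assumes "u \<in> factors \<phi> w" "length w < length u"
  obtains z where "sublist u (morph_ext \<phi> z)"
proof -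
  obtain n where "sublist u ((morph_ext \<phi> ^^ n) w)"
    using assms(1) unfolding mem_factors_iff lang_def by blast
  moreover have "n \<noteq> 0"
  proof
    assume "n = 0"
    then show False using calculation assms(2) sublist_length_le by fastforce
  qed
  ultimately show ?thesis using that by (cases n) auto
qed

lemma R_ab_le:
  assumes "\<And>m. ab_power m \<in> factors \<phi> w \<Longrightarrow> m \<le> N"
  shows "R_ab \<phi> w \<le> N"
proof -
  let ?S = "{m. ab_power m \<in> factors \<phi> w}"
  have "?S \<subseteq> {..N}" using assms by auto
  then have "finite ?S" using finite_subset by blast
  moreover have "0 \<in> ?S" by (simp add: ab_power_def Nil_in_factors)
  ultimately have "Max ?S \<le> N" using assms by (intro Max.boundedI) auto
  then show ?thesis by (simp add: R_ab_def ab_power_def)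
qed

text \<open>The infinite word \<open>\<phi>(abab\<dots>)\<close>, read letter by letter.\<close>
definition phi_ab_seq :: "morph \<Rightarrow> nat \<Rightarrow> nat \<Rightarrow> letter" where
  "phi_ab_seq \<phi> k n = \<phi> (if even (n div k) then La else Lb) ! (n mod k)"

lemma periodic_phi_ab_seq: "periodic (phi_ab_seq \<phi> k) (2 * k)"
  by (cases "k = 0") (simp_all add: periodic_def phi_ab_seq_def)

lemma nth_letter_phi_ab_seq: "j < k \<Longrightarrow> \<phi> c ! j = phi_ab_seq \<phi> k (j + (if c = La then 0 else k))"
  by (cases c) (simp_all add: phi_ab_seq_def)

lemma nth_morph_ext_alternating:
  assumes "uniform \<phi> k" "alternating z" "p < k * length z"
  shows "morph_ext \<phi> z ! p = phi_ab_seq \<phi> k (p + (if z ! 0 = La then 0 else k))"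
proof -
  have k: "0 < k" using assms(3) by (cases k) auto
  then have "p div k < length z" using assms(3) by (simp add: div_less_iff_less_mult mult.commute)
  then have "z ! (p div k) = (if even (p div k) = (z ! 0 = La) then La else Lb)"
    using alternating_nth[OF assms(2) \<open>p div k < length z\<close>] by (cases "z ! 0"; cases "z ! (p div k)") auto
  then show ?thesis using nth_morph_ext[OF assms(1,3)] k by (auto simp: phi_ab_seq_def)
qed

text \<open>A factor of length at most \<open>k\<close> of a \<open>k\<close>-uniform image meets at most two blocks \<open>\<phi>(X)\<phi>(Y)\<close>;
  up to the period \<open>2k\<close> these are consecutive in \<open>\<phi>(abab\<dots>)\<close> when \<open>X \<noteq> Y\<close> and one block apart when
  \<open>X = Y\<close>.\<close>
lemma short_sublist_morph_ext_phi_ab_seq: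
  assumes "uniform \<phi> k" "sublist w (morph_ext \<phi> z)" "length w \<le> k"
  obtains \<delta> a L1 where "\<delta> = 0 \<or> \<delta> = k"
    and "\<And>i. i < length w \<Longrightarrow> w ! i = phi_ab_seq \<phi> k (a + i + (if i < L1 then 0 else \<delta>))"
proof -
  let ?P = "phi_ab_seq \<phi> k"
  let ?off = "\<lambda>c. if c = La then 0 else k"
  obtain p s where ps: "morph_ext \<phi> z = p @ w @ s" using assms(2) unfolding sublist_def by blast
  define b where "b = length p div k"
  define r where "r = length p mod k"
  define X where "X = z ! b"
  define Y where "Y = z ! Suc b"
  have "w ! i = ?P (r + ?off X + i + (if i < k - r then 0 else if X = Y then k else 0))"
    if i: "i < length w" for i
  proof -
    have k: "0 < k" using i assms(3) by simp
    have pos: "length p + i < k * length z"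
      using i arg_cong[OF ps, of length] length_morph_ext[OF assms(1)] by simp
    have "w ! i = ?P ((length p + i) mod k + ?off (z ! ((length p + i) div k)))"
      using ps nth_morph_ext[OF assms(1) pos] k i
        nth_letter_phi_ab_seq[of "(length p + i) mod k" k \<phi> "z ! ((length p + i) div k)"]
      by (simp add: nth_append)
    also have "\<dots> = ?P (r + ?off X + i + (if i < k - r then 0 else if X = Y then k else 0))"
    proof (cases "i < k - r")
      case True
      have "r + i < k" using True by simp
      moreover have eq: "length p + i = (r + i) + b * k" by (simp add: b_def r_def)
      ultimately have "(length p + i) div k = b" "(length p + i) mod k = r + i"
        unfolding eq using k by simp_all
      then show ?thesis using True by (simp add: X_def ac_simps)
    next
      case False
      have "r < k" using k by (simp add: r_def)
      then have "r + i - k < k" using i assms(3) by linarith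
      moreover have eq: "length p + i = (r + i - k) + Suc b * k" using False by (simp add: b_def r_def)
      ultimately have "(length p + i) div k = Suc b" "(length p + i) mod k = r + i - k"
        unfolding eq using k by (simp_all del: mult_Suc)
      then have "?P ((length p + i) mod k + ?off (z ! ((length p + i) div k))) = ?P (r + i - k + ?off Y)"
        by (simp add: Y_def)
      also have "\<dots> = ?P (r + i - k + ?off Y + 2 * k * (if X = La \<and> Y = Lb then 0 else 1))"
        by (rule periodic_add_mult[OF periodic_phi_ab_seq, symmetric])
      also have "r + i - k + ?off Y + 2 * k * (if X = La \<and> Y = Lb then 0 else 1)
          = r + ?off X + i + (if X = Y then k else 0)"
        using False by (cases X; cases Y) auto
      finally show ?thesis using False by simp
    qed
    finally show ?thesis .
  qed
  then show ?thesis using that[of "if X = Y then k else 0" "r + ?off X" "k - r"] by (simp add: ac_simps)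
qed

text \<open>Both windows are constant, the second one with the value flipped iff \<open>\<delta>\<close> is odd. For \<open>\<delta> = 0\<close>
  they form one window longer than a period; for \<open>\<delta> = k \<equiv> h\<close> and \<open>k\<close> even they are half a period apart;
  for \<open>k\<close> odd they carry opposite values but are too long to fit into one period together.\<close>
lemma periodic_two_windows_constant:
  fixes f :: "nat \<Rightarrow> bool"
  assumes per: "periodic f (2 * h)" and h: "2 \<le> h" and k: "k = 2 * h * e + h" "1 \<le> e"
    and \<delta>: "\<delta> = 0 \<or> \<delta> = k" and len: "k - 1 \<le> N1 + N2" "even (N1 + N2)"
    and win1: "\<forall>i<N1. f (a + i) = c"
    and win2: "\<forall>j<N2. f (a + N1 + \<delta> + j) = (c = even \<delta>)"
  shows "f m = f n"
proof (rule ccontr)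
  assume nonconst: "f m \<noteq> f n"
  have no_full_window: "\<not> (\<forall>i<2 * h. f (b + i) = d)" for b d
  proof
    assume window: "\<forall>i<2 * h. f (b + i) = d"
    have "0 < 2 * h" using h by simp
    then have "f m = d" "f n = d" using periodic_constant_on_period[OF per _ window] by blast+
    with nonconst show False by simp
  qed
  have "2 * h \<le> 2 * h * e" using k(2) by simp
  then have long: "2 * h < k - 1" using k h by linarith
  have N1: "N1 < 2 * h"
  proof (rule ccontr)
    assume "\<not> N1 < 2 * h"
    then show False using no_full_window[of a c] win1 by simp
  qed
  have N2: "N2 < 2 * h"
  proof (rule ccontr)
    assume "\<not> N2 < 2 * h"
    then show False using no_full_window[of "a + N1 + \<delta>" "c = even \<delta>"] win2 by simp
  qed
  show False
  proof (cases "\<delta> = 0")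
    case True
    have "f (a + i) = c" if "i < 2 * h" for i
    proof (cases "i < N1")
      case False
      then have "i - N1 < N2" using that long len(1) by linarith
      then have "f (a + N1 + \<delta> + (i - N1)) = c" using win2 True by simp
      moreover have "a + N1 + \<delta> + (i - N1) = a + i" using True False by simp
      ultimately show ?thesis by simp
    qed (use win1 in simp)
    then show False using no_full_window[of a c] by blast
  next
    case False
    then have \<delta>k: "\<delta> = k" using \<delta> by simp
    show False
    proof (cases "even k")
      case True
      have "f (a + N1 + h + j) = f (a + N1 + k + j)" for j
        using periodic_add_mult[OF per, of "a + N1 + h + j" e] k by (simp add: ac_simps)
      then have win2': "\<forall>j<N2. f (a + N1 + h + j) = c" using win2 \<delta>k True by simp
      have "k \<le> N1 + N2" using len True by presburger
      then have "3 * h \<le> N1 + N2" using k \<open>2 * h \<le> 2 * h * e\<close> by linarith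
      then have "f (a + i) = c" for i
        using periodic_constant_on_windows_half_apart[OF per _ _ win1 win2'] h by simp
      then show False using no_full_window[of a c] by blast
    next
      case False
      have "\<forall>j<N2. f (a + N1 + \<delta> + j) \<noteq> c" using win2 \<delta>k False by simp
      moreover have "0 < 2 * h" "N1 \<le> 2 * h" "N2 \<le> 2 * h" using N1 N2 h by simp_all
      ultimately have "N1 + N2 \<le> 2 * h" using periodic_opposite_windows_le[OF per _ _ _ win1] by blast
      then show False using len(1) long k h by linarith
    qed
  qed
qed

lemma alternating_reading_imp_alternating:
  fixes P :: "nat \<Rightarrow> letter"
  assumes per: "periodic P (2 * h)" and h: "2 \<le> h" and k: "k = 2 * h * e + h" "1 \<le> e"
    and \<delta>: "\<delta> = 0 \<or> \<delta> = k" and len: "k - 1 \<le> L" "even L"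
    and reading: "\<forall>i<L. P (a + i + (if i < L1 then 0 else \<delta>)) = (if even i then La else Lb)"
  shows "P n \<noteq> P (Suc n)"
proof
  assume stutter: "P n = P (Suc n)"
  define f where "f m \<longleftrightarrow> (P m = La) = even m" for m
  \<comment> \<open>an alternating reading makes \<open>f\<close> constant on each window, a stutter makes it change\<close>
  define N1 where "N1 = min L1 L"
  have per_f: "periodic f (2 * h)" using per unfolding periodic_def f_def by simp
  have win1: "\<forall>i<N1. f (a + i) = even a"
  proof (intro allI impI)
    fix i assume "i < N1"
    then have "P (a + i) = (if even i then La else Lb)"
      using reading[rule_format, of i] unfolding N1_def by simp
    then show "f (a + i) = even a" unfolding f_def by (cases "even i") simp_all
  qed
  have win2: "\<forall>j<L - N1. f (a + N1 + \<delta> + j) = (even a = even \<delta>)"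
  proof (intro allI impI)
    fix j assume j: "j < L - N1"
    then have "N1 + j < L" "\<not> N1 + j < L1" unfolding N1_def by auto
    then have "P (a + N1 + \<delta> + j) = (if even (N1 + j) then La else Lb)"
      using reading[rule_format, of "N1 + j"] by (simp add: ac_simps)
    then show "f (a + N1 + \<delta> + j) = (even a = even \<delta>)"
      unfolding f_def by (cases "even (N1 + j)") auto
  qed
  have "k - 1 \<le> N1 + (L - N1)" "even (N1 + (L - N1))" using len unfolding N1_def by auto
  then have "f n = f (Suc n)" by (rule periodic_two_windows_constant[OF per_f h k \<delta> _ _ win1 win2])
  then show False using stutter unfolding f_def by (cases "even n") simp_all
qed

lemma dvd_double_not_dvd_decompose:
  fixes g k :: nat
  assumes "g dvd 2 * k" "\<not> g dvd k" "g \<le> k"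
  obtains h e where "g = 2 * h" "k = g * e + h" "1 \<le> e"
proof -
  obtain c where c: "2 * k = g * c" using assms(1) by blast
  have "odd c"
  proof
    assume "even c"
    then have "k = g * (c div 2)" using c by (metis dvd_mult_div_cancel mult.left_commute nat_mult_eq_cancel1 zero_less_numeral)
    then show False using assms(2) by simp
  qed
  then obtain e where "c = 2 * e + 1" using oddE by blast
  then have ke: "2 * k = 2 * (g * e) + g" using c by (simp add: algebra_simps)
  have "e \<noteq> 0" using ke assms(2,3) by (cases "e = 0") auto
  then show thesis using that[of "k - g * e" e] ke by simp
qed

lemma GO_edge_self_conjugate:
  assumes "GO_edge \<phi> s1 ([A], [A], l) s2"
  obtains x where "length x = l" "0 < l" "l < length A" "A = s1 @ x" "A = x @ s2"
proof -
  obtain x where x: "length x = l" "overhang_wit \<phi> [A] [A] x"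
    and s1: "s1 = take (length A - l) A" and s2: "s2 = drop l A"
    using assms unfolding GO_edge_def overhang_def left_overhang_def right_overhang_def by auto
  then have "x \<noteq> []" "x \<noteq> A" "prefix x A" "suffix x A" unfolding overhang_wit_def by auto
  then obtain u v where u: "A = x @ u" "u \<noteq> []" and v: "A = v @ x" and "0 < l"
    using x(1) unfolding prefix_def suffix_def by (metis append.right_neutral length_greater_0_conv)
  moreover have "s1 = v" using s1 v x(1) by simp
  moreover have "s2 = u" using s2 u x(1) by simp
  ultimately show thesis using that[of x] x(1) by simp
qed

lemma alternating_morph_ext:
  assumes "uniform \<phi> k" "\<forall>n. phi_ab_seq \<phi> k n \<noteq> phi_ab_seq \<phi> k (Suc n)" "alternating z"
  shows "alternating (morph_ext \<phi> z)"
  unfolding alternating_def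
proof (intro allI impI)
  fix i assume "Suc i < length (morph_ext \<phi> z)"
  then have "i < k * length z" "Suc i < k * length z" using length_morph_ext[OF assms(1)] by simp_all
  then show "morph_ext \<phi> z ! i \<noteq> morph_ext \<phi> z ! Suc i"
    using nth_morph_ext_alternating[OF assms(1,3)] assms(2) by simp
qed

lemma ab_power_in_factors_if_alternating:
  assumes "uniform \<phi> k" "2 \<le> k" "\<forall>n. phi_ab_seq \<phi> k n \<noteq> phi_ab_seq \<phi> k (Suc n)"
  shows "ab_power m \<in> factors \<phi> [La]"
proof -
  let ?W = "(morph_ext \<phi> ^^ (2 * m + 2)) [La]"
  have "alternating ((morph_ext \<phi> ^^ n) [La])" for n
  proof (induction n)
    case 0 then show ?case by (simp add: alternating_def)
  qed (simp add: alternating_morph_ext[OF assms(1,3)])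
  moreover have "2 * m + 1 < length ?W"
  proof -
    have "2 * m + 2 < 2 ^ (2 * m + 2)" by (rule less_exp)
    also have "\<dots> \<le> k ^ (2 * m + 2)" using assms(2) by (rule power_mono) simp
    also have "\<dots> = length ?W" by (rule length_morph_ext_iterate[OF assms(1), symmetric])
    finally show ?thesis by simp
  qed
  ultimately have "sublist (ab_power m) ?W" by (intro sublist_ab_power_alternating)
  then show ?thesis using factors_sublist[OF iterate_in_factors] by blast
qed

locale conjugate_images =
  fixes \<phi> :: morph and k l :: nat and x y s1 s2 :: "letter list"
  assumes uniform: "uniform \<phi> k"
    and a_conj: "\<phi> La = s1 @ x" "\<phi> La = x @ s2"
    and b_conj: "\<phi> Lb = s2 @ y" "\<phi> Lb = y @ s1"
    and len_x: "length x = l" and l_pos: "0 < l" and l_less: "l < k"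
    and s_neq: "s1 \<noteq> s2"
begin

abbreviation P :: "nat \<Rightarrow> letter" where
  "P \<equiv> phi_ab_seq \<phi> k"

lemma morph_ext_ab_power_conj: "morph_ext \<phi> (ab_power m) @ x = x @ morph_ext \<phi> (ba_power m)"
proof (induction m)
  case (Suc m)
  have "x @ morph_ext \<phi> (ba_power (Suc m)) = x @ \<phi> Lb @ \<phi> La @ morph_ext \<phi> (ba_power m)"
    by (simp add: ba_power_def)
  also have "\<dots> = (x @ s2) @ (y @ s1) @ x @ morph_ext \<phi> (ba_power m)"
    using a_conj(1) b_conj(1) by simp
  also have "\<dots> = \<phi> La @ \<phi> Lb @ morph_ext \<phi> (ab_power m) @ x"
    using a_conj(2) b_conj(2) Suc by simp
  also have "\<dots> = morph_ext \<phi> (ab_power (Suc m)) @ x"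
    by (simp add: ab_power_def)
  finally show ?case ..
qed (simp add: ab_power_def ba_power_def)

lemma nth_morph_ext_ab_power:
  assumes "n < 2 * k * m"
  shows "morph_ext \<phi> (ab_power m) ! n = P n"
proof -
  have "0 < m" using assms by (cases m) auto
  then show ?thesis using nth_morph_ext_alternating[OF uniform alternating_ab_power, of n m] assms
    by (simp add: nth_ab_power mult.assoc)
qed

lemma phi_ab_seq_shift: "P (n + l) = P (n + k)"
proof -
  define m where "m = Suc n"
  have "n \<le> k * n" using l_less by simp
  moreover have "2 * k * m = 2 * (k * n) + 2 * k" "2 * k * Suc m = 2 * k * m + 2 * k"
    by (simp_all add: m_def algebra_simps)
  ultimately have "n + l < 2 * k * m" "k + n < 2 * k * Suc m" using l_less by linarith+
  have "P (n + l) = (morph_ext \<phi> (ab_power m) @ x) ! (l + n)"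
    using nth_morph_ext_ab_power[OF \<open>n + l < 2 * k * m\<close>] \<open>n + l < 2 * k * m\<close>
      length_morph_ext[OF uniform] by (simp add: nth_append add.commute mult.assoc)
  also have "\<dots> = morph_ext \<phi> (ba_power m) ! n"
    by (metis len_x morph_ext_ab_power_conj nth_append_length_plus)
  also have "\<dots> = morph_ext \<phi> (ab_power (Suc m)) ! (k + n)"
    using uniform_length[OF uniform] length_morph_ext[OF uniform] \<open>n + l < 2 * k * m\<close>
    by (simp add: ab_power_Suc_ba_power nth_append mult.assoc)
  also have "\<dots> = P (n + k)"
    using nth_morph_ext_ab_power[OF \<open>k + n < 2 * k * Suc m\<close>] by (simp add: add.commute)
  finally show ?thesis .
qed

lemma not_periodic_k: "\<not> periodic P k"
proof
  assume per: "periodic P k"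
  have "\<phi> La = \<phi> Lb"
  proof (rule nth_equalityI)
    fix i assume "i < length (\<phi> La)"
    then have "i < k" using uniform_length[OF uniform] by simp
    then show "\<phi> La ! i = \<phi> Lb ! i"
      using nth_letter_phi_ab_seq[of i k \<phi> La] nth_letter_phi_ab_seq[of i k \<phi> Lb] per
      unfolding periodic_def by simp
  qed (simp add: uniform_length[OF uniform])
  moreover have "length s1 = length s2"
    using arg_cong[OF b_conj(1), of length] arg_cong[OF b_conj(2), of length] by simp
  ultimately show False using a_conj(1) b_conj(1) s_neq by simp
qed

lemma phi_ab_seq_even_period:
  obtains h e where "periodic P (2 * h)" "k = 2 * h * e + h" "1 \<le> e"
proof -
  have per_2k: "P (n + 2 * k) = P n" for n
    using periodic_phi_ab_seq unfolding periodic_def by blast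
  have "periodic P (k - l)"
    unfolding periodic_def
  proof
    fix n
    have "P (n + (k - l)) = P (n + (k - l) + 2 * k)" using per_2k by simp
    also have "\<dots> = P (n + (k - l) + k + k)" by (simp add: mult_2 add.assoc)
    also have "\<dots> = P (n + (k - l) + k + l)" using phi_ab_seq_shift by simp
    also have "\<dots> = P (n + 2 * k)" using l_less by (simp add: mult_2 add.assoc)
    finally show "P (n + (k - l)) = P n" using per_2k by simp
  qed
  then have per: "periodic P (gcd (k - l) (2 * k))"
    using periodic_gcd[OF _ periodic_phi_ab_seq] l_less by simp
  have "gcd (k - l) (2 * k) dvd 2 * k" by simp
  moreover have "\<not> gcd (k - l) (2 * k) dvd k" using periodic_dvd[OF per] not_periodic_k by blast
  moreover have "gcd (k - l) (2 * k) \<le> k" using l_less gcd_le1_nat[of "k - l" "2 * k"] by linarith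
  ultimately obtain h e where "gcd (k - l) (2 * k) = 2 * h" "k = gcd (k - l) (2 * k) * e + h" "1 \<le> e"
    by (rule dvd_double_not_dvd_decompose)
  then show thesis using that per by simp
qed

text \<open>The interpretation \<open>(x, (ab)\<^sup>ma, s\<^sub>2)\<close> of \<open>\<phi>((ba)\<^sup>m)\<close> is never synchronized with the trivial one,
  since \<open>0 < l < k\<close>.\<close>
lemma not_circular_if_alternating:
  assumes alt: "\<forall>n. P n \<noteq> P (Suc n)"
  shows "\<not> circular \<phi> [La]"
proof
  assume "circular \<phi> [La]"
  then obtain Z where Z: "\<forall>u\<in>factors \<phi> [La]. Z < length u \<longrightarrow> (\<exists>j. sync_point \<phi> [La] u j)"
    unfolding circular_def by blast
  define m where "m = Suc Z"
  define v where "v = ab_power m @ [La]"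
  define u where "u = morph_ext \<phi> (ba_power m)"
  have ab_fac: "ab_power (Suc m) \<in> factors \<phi> [La]"
    using ab_power_in_factors_if_alternating[OF uniform _ alt] l_pos l_less by simp
  have "sublist (ba_power m) (ab_power (Suc m))"
    unfolding ab_power_Suc_ba_power by (metis Cons_eq_appendI append_Nil sublist_appendI)
  then have ba_fac: "ba_power m \<in> factors \<phi> [La]" using factors_sublist[OF ab_fac] by blast
  then have u_fac: "u \<in> factors \<phi> [La]" unfolding u_def by (rule morph_ext_in_factors)
  have "sublist v (ab_power (Suc m))" unfolding v_def ab_power_Suc by simp
  then have v_fac: "v \<in> factors \<phi> [La]" using factors_sublist[OF ab_fac] by blast
  have "2 * m \<le> length u" using l_less length_morph_ext[OF uniform] unfolding u_def by simp
  then have "Z < length u" unfolding m_def by simp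
  then obtain j where sp: "sync_point \<phi> [La] u j" using Z u_fac by blast
  have "interp \<phi> [La] u ([], ba_power m, [])" using ba_fac unfolding interp_def u_def by simp
  moreover have "interp \<phi> [La] u (x, v, s2)"
    using v_fac a_conj(2) morph_ext_ab_power_conj unfolding interp_def u_def v_def by simp
  ultimately have "j \<le> length u" and "synchronized_at \<phi> u ([], ba_power m, []) (x, v, s2) j"
    using sp unfolding sync_point_def by blast+
  then obtain i i' where i: "i \<le> length (ba_power m)" "morph_ext \<phi> (take i (ba_power m)) = take j u"
    and i': "i' \<le> length v" "morph_ext \<phi> (take i' v) = x @ take j u"
    unfolding synchronized_at_def by auto
  have "k * i = j" using arg_cong[OF i(2), of length] i(1) \<open>j \<le> length u\<close>
    by (simp add: length_morph_ext[OF uniform])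
  moreover have "k * i' = l + j" using arg_cong[OF i'(2), of length] i'(1) \<open>j \<le> length u\<close> len_x
    by (simp add: length_morph_ext[OF uniform])
  ultimately have "l = k * (i' - i)" by (simp add: diff_mult_distrib2)
  then have "k dvd l" by simp
  then show False using l_pos l_less by (simp add: nat_dvd_not_less)
qed

lemma ab_power_factor_bound:
  assumes stutter: "P n = P (Suc n)" and fac: "ab_power m \<in> factors \<phi> [La]"
  shows "2 * m \<le> k - 2"
proof (rule ccontr)
  assume "\<not> 2 * m \<le> k - 2"
  then have "k div 2 \<le> m" by presburger
  define w where "w = ab_power (k div 2)"
  have "sublist w (ab_power m)"
    using ab_power_add[of "k div 2" "m - k div 2"] \<open>k div 2 \<le> m\<close> unfolding w_def by simp
  then have "w \<in> factors \<phi> [La]" using factors_sublist[OF fac] by blast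
  moreover have "length w = 2 * (k div 2)" "2 \<le> k" using l_pos l_less unfolding w_def by simp_all
  then have len: "length w \<le> k" "1 < length w" "k - 1 \<le> length w" "even (length w)" by presburger+
  ultimately obtain z where "sublist w (morph_ext \<phi> z)" by (auto elim: factor_sublist_image)
  then obtain \<delta> a L1 where \<delta>: "\<delta> = 0 \<or> \<delta> = k"
    and reading: "\<And>i. i < length w \<Longrightarrow> w ! i = P (a + i + (if i < L1 then 0 else \<delta>))"
    by (rule short_sublist_morph_ext_phi_ab_seq[OF uniform _ len(1)]) blast
  obtain h e where per: "periodic P (2 * h)" and k: "k = 2 * h * e + h" "1 \<le> e"
    by (rule phi_ab_seq_even_period)
  have "2 \<le> h"
  proof (rule ccontr)
    assume "\<not> 2 \<le> h"
    moreover have "h \<noteq> 0"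
    proof
      assume "h = 0"
      then show False using k l_less by simp
    qed
    ultimately have "h = 1" by simp
    then have "periodic P 2" using per by simp
    then have const: "P j = P 0" for j using stutter by (rule periodic_2_constant)
    have "periodic P k" unfolding periodic_def using const by metis
    then show False using not_periodic_k by blast
  qed
  moreover have "\<forall>i<length w. P (a + i + (if i < L1 then 0 else \<delta>)) = (if even i then La else Lb)"
  proof (intro allI impI)
    fix i assume i: "i < length w"
    then have "w ! i = (if even i then La else Lb)" unfolding w_def by (simp add: nth_ab_power)
    then show "P (a + i + (if i < L1 then 0 else \<delta>)) = (if even i then La else Lb)"
      using reading[OF i] by simp
  qed
  ultimately have "P n \<noteq> P (Suc n)"
    using alternating_reading_imp_alternating[OF per _ k \<delta> len(3,4)] by blast
  then show False using stutter by simp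
qed

end

theorem mainTheorem11:
  fixes \<phi> :: morph and k l :: nat and s1 s2 :: "letter list"
  assumes "k \<ge> 2"
    and "circular \<phi> [La]"
    and "uniform \<phi> k"
    and "s1 \<noteq> s2"
    and "GO_edge \<phi> s1 ([\<phi> La], [\<phi> La], l) s2"
    and "GO_edge \<phi> s2 ([\<phi> Lb], [\<phi> Lb], l) s1"
  shows "real (min (R_ab \<phi> [La]) (R_ba \<phi> [La])) \<le> (real k - 2) / 2"
proof -
  obtain x where x: "length x = l" "0 < l" "l < k" "\<phi> La = s1 @ x" "\<phi> La = x @ s2"
    using GO_edge_self_conjugate[OF assms(5)] uniform_length[OF assms(3)] by metis
  obtain y where y: "\<phi> Lb = s2 @ y" "\<phi> Lb = y @ s1"
    using GO_edge_self_conjugate[OF assms(6)] by metis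
  interpret conjugate_images \<phi> k l x y s1 s2
    using assms(3,4) x y by unfold_locales
  obtain n where stutter: "P n = P (Suc n)" using not_circular_if_alternating assms(2) by blast
  have "R_ab \<phi> [La] \<le> (k - 2) div 2"
    using ab_power_factor_bound[OF stutter] by (intro R_ab_le) fastforce
  then have "real (2 * R_ab \<phi> [La]) \<le> real k - 2" using assms(1) by simp
  moreover have "real (min (R_ab \<phi> [La]) (R_ba \<phi> [La])) \<le> real (R_ab \<phi> [La])" by simp
  ultimately show ?thesis by simp
qed

end
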